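(* In the Balanced RePartitioning problem without augmentation, for any cluster size $k\ge 2$, any migration cost $\alpha\ge 1$, and independently of the number of clusters $\ell$, no deterministic online algorithm can achieve a competitive ratio smaller than $k+\frac{k-2}{2\alpha}$.
   Context: Balanced RePartitioning (BRP): a set $V$ of $n$ nodes is initially distributed across $\ell$ clusters, each of capacity $k$; without augmentation $n=k\ell$. A sequence $\sigma$ of communication requests $\{u_t,v_t\}$ between pairs of nodes arrives online. Before serving request $\sigma_t$, an algorithm may repartition the nodes (respecting capacities) by migrating nodes between clusters at cost $\alpha\ge 1$ per node migration; the request then costs $0$ if $u_t,v_t$ are in the same cluster and $1$ otherwise. The cost of an algorithm on $\sigma$ is total migration plus communication cost. $\textsc{Off}$ is an optimal offline algorithm knowing $\sigma$ in advance; online and offline algorithms start from the same initial configuration. The competitive ratio of an online algorithm $\textsc{On}$ is $\max_\sigma \textsc{On}(\sigma)/\textsc{Off}(\sigma)$. *)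

theory Defs
  imports Complex_Main
begin

text \<open>Balanced RePartitioning without augmentation.
  Nodes are 0,...,k*l-1, clusters are 0,...,l-1, each of capacity k.
  A configuration maps each node to its cluster.\<close>

definition valid_conf :: "nat \<Rightarrow> nat \<Rightarrow> (nat \<Rightarrow> nat) \<Rightarrow> bool" where
  "valid_conf k l C \<longleftrightarrow>
     (\<forall>v < k * l. C v < l) \<and> (\<forall>c < l. card {v. v < k * l \<and> C v = c} \<le> k)"

definition migrations :: "nat \<Rightarrow> nat \<Rightarrow> (nat \<Rightarrow> nat) \<Rightarrow> (nat \<Rightarrow> nat) \<Rightarrow> nat" where
  "migrations k l C C' = card {v. v < k * l \<and> C v \<noteq> C' v}"

definition valid_reqs :: "nat \<Rightarrow> nat \<Rightarrow> (nat \<times> nat) list \<Rightarrow> bool" where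
  "valid_reqs k l \<sigma> \<longleftrightarrow> (\<forall>(u, v) \<in> set \<sigma>. u < k * l \<and> v < k * l \<and> u \<noteq> v)"

text \<open>Cost of serving \<sigma> starting in configuration init, where Cs ! t is the
  configuration (after repartitioning) in which request \<sigma> ! t is served.\<close>
definition sched_cost :: "nat \<Rightarrow> nat \<Rightarrow> real \<Rightarrow> (nat \<Rightarrow> nat) \<Rightarrow> (nat \<Rightarrow> nat) list
    \<Rightarrow> (nat \<times> nat) list \<Rightarrow> real" where
  "sched_cost k l \<alpha> init Cs \<sigma> =
     (\<Sum>t < length \<sigma>. \<alpha> * real (migrations k l ((init # Cs) ! t) (Cs ! t))
        + (if (Cs ! t) (fst (\<sigma> ! t)) = (Cs ! t) (snd (\<sigma> ! t)) then 0 else 1))"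

definition off_cost :: "nat \<Rightarrow> nat \<Rightarrow> real \<Rightarrow> (nat \<Rightarrow> nat) \<Rightarrow> (nat \<times> nat) list \<Rightarrow> real" where
  "off_cost k l \<alpha> init \<sigma> =
     (INF Cs \<in> {Cs. length Cs = length \<sigma> \<and> (\<forall>C \<in> set Cs. valid_conf k l C)}.
        sched_cost k l \<alpha> init Cs \<sigma>)"

text \<open>A deterministic online algorithm: given the requests seen so far, including the
  current one, it outputs the configuration in which the current request is served.\<close>
definition online_alg :: "nat \<Rightarrow> nat \<Rightarrow> ((nat \<times> nat) list \<Rightarrow> nat \<Rightarrow> nat) \<Rightarrow> bool" where
  "online_alg k l A \<longleftrightarrow> (\<forall>\<rho>. \<rho> \<noteq> [] \<and> valid_reqs k l \<rho> \<longrightarrow> valid_conf k l (A \<rho>))"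

definition on_confs :: "((nat \<times> nat) list \<Rightarrow> nat \<Rightarrow> nat) \<Rightarrow> (nat \<times> nat) list \<Rightarrow> (nat \<Rightarrow> nat) list" where
  "on_confs A \<sigma> = map (\<lambda>t. A (take (Suc t) \<sigma>)) [0..<length \<sigma>]"

definition on_cost :: "nat \<Rightarrow> nat \<Rightarrow> real \<Rightarrow> (nat \<Rightarrow> nat) \<Rightarrow> ((nat \<times> nat) list \<Rightarrow> nat \<Rightarrow> nat)
    \<Rightarrow> (nat \<times> nat) list \<Rightarrow> real" where
  "on_cost k l \<alpha> init A \<sigma> = sched_cost k l \<alpha> init (on_confs A \<sigma>) \<sigma>"

end

theory Submission
  imports Defs "HOL-Combinatorics.Transposition"
begin

text \<open>The adversary always asks node 0 to communicate with a node that the online algorithm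
  currently keeps outside node 0's cluster, so the online algorithm pays 1 per request, or at
  least 2\<alpha> whenever it migrates (in a configuration with all clusters full, a single migration
  is impossible).  Against it we run two families of offline algorithms that only ever use the
  configurations in which node 0's cluster is {0..k} minus one node.  The k static ones each pay
  roughly for the requests to their excluded node, so their average cost is about T/k.  The k-1
  others let the excluded node follow a permutation of {1..k} that always avoids the current
  target; a request target can only change when the online algorithm migrates, and then only one of
  them pays 2\<alpha>.  Averaging both families against the online cost T + (2\<alpha>-1)N, with N the
  number of migrating steps, gives the ratio k + (k-2)/(2\<alpha>) up to an additive constant.\<close>

lemma valid_conf_card_cluster:
  assumes valid: "valid_conf k l C" and c: "c < l"
  shows "card {v. v < k * l \<and> C v = c} = k"
proof -
  let ?F = "\<lambda>c. {v. v < k * l \<and> C v = c}"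
  have le: "card (?F c) \<le> k" if "c < l" for c using valid that unfolding valid_conf_def by auto
  have partition: "{..<k*l} = (\<Union>c\<in>{..<l}. ?F c)" using valid unfolding valid_conf_def by auto
  have "card {..<k*l} = (\<Sum>c\<in>{..<l}. card (?F c))"
    unfolding partition by (rule card_UN_disjoint) auto
  then have sum: "(\<Sum>c\<in>{..<l}. card (?F c)) = (\<Sum>c\<in>{..<l}. k)" by simp
  show ?thesis
  proof (rule ccontr)
    assume "card (?F c) \<noteq> k"
    with le[OF c] have "card (?F c) < k" by simp
    then have "(\<Sum>c\<in>{..<l}. card (?F c)) < (\<Sum>c\<in>{..<l}. k)"
      by (intro sum_strict_mono_ex1) (use le c in auto)
    with sum show False by simp
  qed
qed

lemma migrations_le: "migrations k l C C' \<le> k * l"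
proof -
  have "{v. v < k * l \<and> C v \<noteq> C' v} \<subseteq> {..<k*l}" by auto
  from card_mono[OF _ this] show ?thesis unfolding migrations_def by simp
qed

lemma migrations_eq_0_iff: "migrations k l C C' = 0 \<longleftrightarrow> (\<forall>v<k*l. C v = C' v)"
  unfolding migrations_def by auto

lemma migrations_self [simp]: "migrations k l C C = 0"
  by (simp add: migrations_eq_0_iff)

text \<open>All clusters are full, so a single migrated node would overfill its new cluster.\<close>

lemma migrations_neq_1:
  assumes valid: "valid_conf k l C" and valid': "valid_conf k l C'"
  shows "migrations k l C C' \<noteq> 1"
proof
  assume "migrations k l C C' = 1"
  then obtain u where moved: "{v. v < k * l \<and> C v \<noteq> C' v} = {u}"
    unfolding migrations_def by (auto simp: card_Suc_eq)
  then have u: "u < k * l" "C u \<noteq> C' u" by auto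
  have fixed: "C v = C' v" if "v < k * l" "v \<noteq> u" for v using moved that by blast
  let ?c = "C' u"
  have c: "?c < l" using valid' u unfolding valid_conf_def by auto
  have "{v. v < k * l \<and> C' v = ?c} = insert u {v. v < k * l \<and> C v = ?c}"
    using fixed u by (auto, metis)
  then have "card {v. v < k * l \<and> C' v = ?c} = Suc (card {v. v < k * l \<and> C v = ?c})"
    using u by simp
  also have "\<dots> = Suc k" using valid_conf_card_cluster[OF valid c] by simp
  finally show False using valid' c unfolding valid_conf_def by fastforce
qed

definition comm_cost :: "(nat \<Rightarrow> nat) \<Rightarrow> nat \<times> nat \<Rightarrow> real" where
  "comm_cost C r = (if C (fst r) = C (snd r) then 0 else 1)"

lemma sched_cost_map:
  assumes "length \<sigma> = T"
  shows "sched_cost k l \<alpha> init (map S [0..<T]) \<sigma> =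
    (\<Sum>t<T. \<alpha> * real (migrations k l (case_nat init S t) (S t)) + comm_cost (S t) (\<sigma> ! t))"
  unfolding sched_cost_def comm_cost_def assms
  by (intro sum.cong) (auto simp: nth_Cons' split: nat.split)

text \<open>The initial repartitioning costs at most \<alpha>kl; the extra migration term at t = T - 1 only
  weakens the bound.\<close>

lemma sched_cost_map_le:
  assumes "length \<sigma> = T" "\<alpha> \<ge> 0"
  shows "sched_cost k l \<alpha> init (map S [0..<T]) \<sigma> \<le> \<alpha> * real (k * l)
    + (\<Sum>t<T. \<alpha> * real (migrations k l (S t) (S (Suc t))) + comm_cost (S t) (\<sigma> ! t))"
proof -
  let ?m = "\<lambda>C C'. \<alpha> * real (migrations k l C C')"
  have m: "0 \<le> ?m C C'" "?m C C' \<le> \<alpha> * real (k * l)" for C C'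
    using assms(2) of_nat_mono[OF migrations_le[of k l C C']] by (auto intro: mult_left_mono)
  have "(\<Sum>t<T. ?m (case_nat init S t) (S t)) \<le> \<alpha> * real (k * l) + (\<Sum>t<T. ?m (S t) (S (Suc t)))"
  proof (cases T)
    case (Suc n)
    have "(\<Sum>t<Suc n. ?m (case_nat init S t) (S t)) = ?m init (S 0) + (\<Sum>t<n. ?m (S t) (S (Suc t)))"
      by (subst sum.lessThan_Suc_shift) simp
    also have "\<dots> \<le> \<alpha> * real (k * l) + (\<Sum>t<Suc n. ?m (S t) (S (Suc t)))"
      using m by (intro add_mono) (auto intro: sum_mono2)
    finally show ?thesis using Suc by simp
  qed (use assms(2) in simp)
  then show ?thesis
    unfolding sched_cost_map[OF assms(1)] sum.distrib by linarith
qed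

lemma off_cost_le_sched_cost:
  assumes "\<alpha> \<ge> 0" "length Cs = length \<sigma>" "\<forall>C\<in>set Cs. valid_conf k l C"
  shows "off_cost k l \<alpha> init \<sigma> \<le> sched_cost k l \<alpha> init Cs \<sigma>"
  unfolding off_cost_def
proof (rule cINF_lower)
  have "sched_cost k l \<alpha> init Cs' \<sigma> \<ge> 0" for Cs'
    unfolding sched_cost_def using assms(1) by (intro sum_nonneg) auto
  then show "bdd_below ((\<lambda>Cs. sched_cost k l \<alpha> init Cs \<sigma>) `
      {Cs. length Cs = length \<sigma> \<and> (\<forall>C\<in>set Cs. valid_conf k l C)})"
    by (intro bdd_belowI[of _ 0]) auto
qed (use assms in auto)

lemma off_cost_nonneg:
  assumes "\<alpha> \<ge> 0" "valid_conf k l init"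
  shows "off_cost k l \<alpha> init \<sigma> \<ge> 0"
  unfolding off_cost_def
proof (rule cINF_greatest)
  show "{Cs. length Cs = length \<sigma> \<and> (\<forall>C\<in>set Cs. valid_conf k l C)} \<noteq> {}"
    using assms(2) by (auto intro!: exI[of _ "replicate (length \<sigma>) init"])
qed (use assms(1) in \<open>auto simp: sched_cost_def intro!: sum_nonneg\<close>)

definition first_separated :: "nat \<Rightarrow> (nat \<Rightarrow> nat) \<Rightarrow> nat" where
  "first_separated k C = (LEAST i. 1 \<le> i \<and> i \<le> k \<and> C i \<noteq> C 0)"

text \<open>Node 0's cluster holds only k of the k+1 nodes 0..k.\<close>

lemma first_separated:
  assumes valid: "valid_conf k l C" and kl: "k < k * l"
  shows "1 \<le> first_separated k C" "first_separated k C \<le> k"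
    and "C (first_separated k C) \<noteq> C 0"
proof -
  have "\<exists>i. 1 \<le> i \<and> i \<le> k \<and> C i \<noteq> C 0"
  proof (rule ccontr)
    assume "\<nexists>i. 1 \<le> i \<and> i \<le> k \<and> C i \<noteq> C 0"
    then have "C i = C 0" if "i \<le> k" for i
      using that by (cases i) auto
    then have "{..k} \<subseteq> {v. v < k * l \<and> C v = C 0}"
      using kl by (blast intro: le_less_trans)
    from card_mono[OF _ this] have "Suc k \<le> card {v. v < k * l \<and> C v = C 0}" by simp
    moreover have "C 0 < l" using valid kl unfolding valid_conf_def by auto
    ultimately show False using valid unfolding valid_conf_def by fastforce
  qed
  then have "1 \<le> first_separated k C \<and> first_separated k C \<le> k \<and> C (first_separated k C) \<noteq> C 0"
    unfolding first_separated_def by (rule LeastI_ex)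
  then show "1 \<le> first_separated k C" "first_separated k C \<le> k"
    and "C (first_separated k C) \<noteq> C 0" by auto
qed

lemma first_separated_cong:
  assumes "\<forall>v<k*l. C v = C' v" "k < k * l"
  shows "first_separated k C = first_separated k C'"
proof -
  have "C i = C' i" if "i \<le> k" for i using assms that le_less_trans by blast
  then show ?thesis unfolding first_separated_def by (metis le0)
qed

text \<open>Cluster c holds the nodes ck, ..., ck+k-1, except that nodes i and k trade places; for
  1 \<le> i \<le> k, node 0's cluster is thus {0..k} minus i.\<close>

definition conf_without :: "nat \<Rightarrow> nat \<Rightarrow> nat \<Rightarrow> nat" where
  "conf_without k i v = transpose i k v div k"

lemma valid_conf_conf_without:
  assumes "i \<le> k" "k < k * l"
  shows "valid_conf k l (conf_without k i)"
  unfolding valid_conf_def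
proof (intro conjI allI impI)
  fix v assume "v < k * l"
  then have "transpose i k v < k * l" using assms by (auto simp: transpose_def)
  then show "conf_without k i v < l"
    unfolding conf_without_def by (simp add: less_mult_imp_div_less mult.commute)
next
  fix c assume "c < l"
  have "{v. v < k * l \<and> conf_without k i v = c} \<subseteq> transpose i k ` {c*k..<c*k+k}"
  proof
    fix v assume "v \<in> {v. v < k * l \<and> conf_without k i v = c}"
    then have "transpose i k v div k = c" "0 < k"
      using assms unfolding conf_without_def by auto
    then have "transpose i k v \<in> {c*k..<c*k+k}"
      using div_mult_mod_eq[of "transpose i k v" k] mod_less_divisor[of k "transpose i k v"]
      by (simp; linarith)
    then show "v \<in> transpose i k ` {c*k..<c*k+k}" by (metis image_eqI transpose_involutory)
  qed
  from card_mono[OF _ this] card_image_le[of "{c*k..<c*k+k}" "transpose i k"]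
  show "card {v. v < k * l \<and> conf_without k i v = c} \<le> k" by simp
qed

lemma migrations_conf_without_le:
  assumes "i \<le> k" "j \<le> k"
  shows "migrations k l (conf_without k i) (conf_without k j) \<le> 2"
proof -
  have "{v. v < k * l \<and> conf_without k i v \<noteq> conf_without k j v} \<subseteq> {i, j}"
    using assms by (auto simp: conf_without_def transpose_def split: if_splits)
  from card_mono[OF _ this] card_insert_le_m1[of 2 "{j}" i]
  show ?thesis unfolding migrations_def by simp
qed

lemma conf_without_same_cluster_iff:
  assumes "1 \<le> q" "q \<le> k" "1 \<le> i" "i \<le> k"
  shows "conf_without k i 0 = conf_without k i q \<longleftrightarrow> q \<noteq> i"
  using assms by (auto simp: conf_without_def transpose_def)

text \<open>The offline algorithm indexed by j excludes node hole_perm q t j from node 0's cluster at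
  time t.  As hole_perm q t 1 = q t and hole_perm q t is injective, the algorithms with j \<noteq> 1
  serve every request to q t locally, and when the target changes to q (t+1) only the one
  algorithm that excluded q (t+1) has to move.\<close>

primrec hole_perm :: "(nat \<Rightarrow> nat) \<Rightarrow> nat \<Rightarrow> nat \<Rightarrow> nat" where
  "hole_perm q 0 = transpose 1 (q 0)"
| "hole_perm q (Suc t) = transpose (q t) (q (Suc t)) \<circ> hole_perm q t"

lemma hole_perm_1: "hole_perm q t 1 = q t"
  by (induction t) auto

lemma inj_hole_perm: "inj (hole_perm q t)"
  by (induction t) (simp_all add: inj_transpose inj_compose del: comp_apply)

lemma hole_perm_bounds:
  assumes "\<And>t. 1 \<le> q t \<and> q t \<le> k" "1 \<le> j" "j \<le> k"
  shows "1 \<le> hole_perm q t j \<and> hole_perm q t j \<le> k"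
  using assms by (induction t) (auto simp: transpose_def)

lemma hole_perm_neq: "j \<noteq> 1 \<Longrightarrow> hole_perm q t j \<noteq> q t"
  using inj_hole_perm[of q t] hole_perm_1[of q t] by (metis injD)

lemma hole_perm_Suc_neq:
  assumes "j \<noteq> 1" "hole_perm q (Suc t) j \<noteq> hole_perm q t j"
  shows "hole_perm q t j = q (Suc t) \<and> q t \<noteq> q (Suc t)"
  using assms hole_perm_neq[OF assms(1), of q t] by (auto simp: transpose_def split: if_splits)

lemma sum_of_bool_inj_le_1:
  assumes "inj f" "finite S"
  shows "(\<Sum>j\<in>S. of_bool (f j = x)) \<le> (1::real)"
proof -
  have "card (S \<inter> {j. f j = x}) \<le> 1"
    using assms by (auto simp: card_le_Suc0_iff_eq dest: injD)
  then show ?thesis using assms(2) by simp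
qed

text \<open>With X = OFF - K, the two offline families give kX \<le> T and (k-2)X \<le> 2\<alpha>N.\<close>

lemma additive_ratio_bound:
  fixes k \<alpha> T N ON OFF K :: real
  assumes "2 \<le> k" "0 < \<alpha>" "0 \<le> N" "T + N \<le> ON"
    and static: "k * OFF \<le> k * K + T"
    and hole: "(k - 1) * OFF \<le> (k - 1) * K + 2 * \<alpha> * N"
  shows "(k + (k - 2) / (2 * \<alpha>)) * OFF \<le> ON + (k + (k - 2) / (2 * \<alpha>)) * K"
proof -
  define X where "X = OFF - K"
  have "k * X \<le> T" using static by (simp add: X_def algebra_simps)
  have "(k - 2) * X \<le> 2 * \<alpha> * N"
  proof (cases "X \<ge> 0")
    case True
    then have "(k - 2) * X \<le> (k - 1) * X" by (simp add: mult_right_mono)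
    also have "\<dots> \<le> 2 * \<alpha> * N" using hole by (simp add: X_def algebra_simps)
    finally show ?thesis .
  next
    case False
    then have "(k - 2) * X \<le> 0" using assms(1) by (simp add: mult_nonneg_nonpos)
    also have "0 \<le> 2 * \<alpha> * N" using assms(2,3) by simp
    finally show ?thesis .
  qed
  then have "(k - 2) / (2 * \<alpha>) * X \<le> N" using assms(2) by (simp add: field_simps)
  with \<open>k * X \<le> T\<close> assms(4) have "(k + (k - 2) / (2 * \<alpha>)) * X \<le> ON"
    by (simp add: distrib_right)
  then show ?thesis unfolding X_def right_diff_distrib by linarith
qed

locale brp_adversary =
  fixes k l :: nat and init :: "nat \<Rightarrow> nat" and A :: "(nat \<times> nat) list \<Rightarrow> nat \<Rightarrow> nat"
  assumes k_ge_2: "k \<ge> 2" and l_ge_2: "l \<ge> 2"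
    and valid_init: "valid_conf k l init" and online: "online_alg k l A"
begin

lemma k_less_kl: "k < k * l"
  using mult_strict_left_mono[of 1 l k] k_ge_2 l_ge_2 by simp

text \<open>reqs t is the adversary's first t requests and conf t the online configuration in which
  request t - 1 was served (the initial one for t = 0).\<close>

primrec reqs :: "nat \<Rightarrow> (nat \<times> nat) list" where
  "reqs 0 = []"
| "reqs (Suc t) = reqs t @ [(0, first_separated k (if t = 0 then init else A (reqs t)))]"

definition conf :: "nat \<Rightarrow> nat \<Rightarrow> nat" where
  "conf t = (if t = 0 then init else A (reqs t))"

abbreviation target :: "nat \<Rightarrow> nat" where
  "target t \<equiv> first_separated k (conf t)"

lemma reqs_Suc: "reqs (Suc t) = reqs t @ [(0, target t)]"
  by (simp add: conf_def)

declare reqs.simps(2) [simp del]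

lemma length_reqs [simp]: "length (reqs t) = t"
  by (induction t) (simp_all add: reqs_Suc)

lemma take_reqs: "m \<le> n \<Longrightarrow> take m (reqs n) = reqs m"
  by (induction n) (auto simp: reqs_Suc le_Suc_eq)

lemma nth_reqs: "t < n \<Longrightarrow> reqs n ! t = (0, target t)"
  by (induction n) (auto simp: reqs_Suc nth_append less_Suc_eq)

lemma target_bounds:
  assumes "valid_conf k l (conf t)"
  shows "1 \<le> target t" "target t \<le> k" "conf t (target t) \<noteq> conf t 0"
  using first_separated[OF assms k_less_kl] by auto

lemma valid_reqs_conf: "valid_reqs k l (reqs t) \<and> valid_conf k l (conf t)"
proof (induction t)
  case 0
  then show ?case using valid_init by (simp add: conf_def valid_reqs_def)
next
  case (Suc t)
  then have "valid_reqs k l (reqs t)" "1 \<le> target t" "target t < k * l"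
    using target_bounds[of t] le_less_trans[OF _ k_less_kl] by blast+
  then have valid_reqs: "valid_reqs k l (reqs (Suc t))"
    using k_ge_2 l_ge_2 unfolding reqs_Suc valid_reqs_def by auto
  then have "valid_conf k l (A (reqs (Suc t)))"
    using online unfolding online_alg_def reqs_Suc by blast
  with valid_reqs show ?case unfolding conf_def by simp
qed

lemma valid_conf_conf: "valid_conf k l (conf t)"
  using valid_reqs_conf by blast

lemmas target = target_bounds[OF valid_conf_conf]

lemma target_less_kl: "target t < k * l"
  using target(2) k_less_kl by (rule le_less_trans)

definition moved :: "nat \<Rightarrow> bool" where
  "moved t \<longleftrightarrow> migrations k l (conf t) (conf (Suc t)) \<noteq> 0"

definition moves :: "nat \<Rightarrow> real" where
  "moves T = (\<Sum>t<T. of_bool (moved t))"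

lemma target_Suc: "\<not> moved t \<Longrightarrow> target (Suc t) = target t"
  using first_separated_cong[OF _ k_less_kl]
  unfolding moved_def migrations_eq_0_iff by metis

lemma on_cost_reqs:
  "on_cost k l \<alpha> init A (reqs T) =
    (\<Sum>t<T. \<alpha> * real (migrations k l (conf t) (conf (Suc t))) + comm_cost (conf (Suc t)) (0, target t))"
proof -
  have "on_confs A (reqs T) = map (\<lambda>t. conf (Suc t)) [0..<T]"
    unfolding on_confs_def by (simp add: take_reqs conf_def)
  moreover have "case_nat init (\<lambda>t. conf (Suc t)) t = conf t" for t
    by (cases t) (simp_all add: conf_def)
  ultimately show ?thesis
    unfolding on_cost_def by (simp add: sched_cost_map nth_reqs)
qed

text \<open>Without migration the request crosses clusters; a migration moves at least two nodes.\<close>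

lemma on_cost_ge:
  assumes "\<alpha> \<ge> 1"
  shows "real T + (2 * \<alpha> - 1) * moves T \<le> on_cost k l \<alpha> init A (reqs T)"
proof -
  have "1 + (2 * \<alpha> - 1) * of_bool (moved t)
      \<le> \<alpha> * real (migrations k l (conf t) (conf (Suc t))) + comm_cost (conf (Suc t)) (0, target t)"
    for t
  proof (cases "moved t")
    case True
    then have "migrations k l (conf t) (conf (Suc t)) \<ge> 2"
      using migrations_neq_1[OF valid_conf_conf valid_conf_conf] unfolding moved_def
      by (metis One_nat_def less_2_cases not_le)
    then have "2 * \<alpha> \<le> \<alpha> * real (migrations k l (conf t) (conf (Suc t)))"
      using assms by (simp add: mult.commute mult_left_mono)
    with True show ?thesis by (simp add: comm_cost_def)
  next
    case False
    then have "\<forall>v<k*l. conf t v = conf (Suc t) v"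
      unfolding moved_def migrations_eq_0_iff by simp
    moreover have "0 < k * l" using target_less_kl[of t] by (rule le_less_trans[OF le0])
    ultimately have "comm_cost (conf (Suc t)) (0, target t) = 1"
      using target(3)[of t] target_less_kl[of t] by (auto simp: comm_cost_def)
    with False show ?thesis by (simp add: moved_def)
  qed
  then have "(\<Sum>t<T. 1 + (2 * \<alpha> - 1) * of_bool (moved t)) \<le> on_cost k l \<alpha> init A (reqs T)"
    unfolding on_cost_reqs by (rule sum_mono)
  then show ?thesis by (simp add: moves_def sum.distrib sum_distrib_left mult.commute)
qed

lemma off_cost_static:
  assumes "\<alpha> \<ge> 0"
  shows "real k * off_cost k l \<alpha> init (reqs T) \<le> real k * (\<alpha> * real (k * l)) + real T"
proof -
  let ?OFF = "off_cost k l \<alpha> init (reqs T)"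
  have excluded: "?OFF \<le> \<alpha> * real (k * l) + (\<Sum>t<T. of_bool (target t = i))" if i: "i \<in> {1..k}" for i
  proof -
    let ?Cs = "map (\<lambda>_. conf_without k i) [0..<T]"
    have "comm_cost (conf_without k i) (0, target t) = of_bool (target t = i)" for t
      using conf_without_same_cluster_iff[OF target(1,2)] i by (simp add: comm_cost_def)
    moreover have "?OFF \<le> sched_cost k l \<alpha> init ?Cs (reqs T)"
      using assms valid_conf_conf_without[OF _ k_less_kl] i by (intro off_cost_le_sched_cost) auto
    ultimately show ?thesis
      using sched_cost_map_le[of "reqs T" T \<alpha> k l init "\<lambda>_. conf_without k i"] assms
      by (simp add: nth_reqs)
  qed
  have "real k * ?OFF = (\<Sum>i\<in>{1..k}. ?OFF)" by simp
  also have "\<dots> \<le> (\<Sum>i\<in>{1..k}. \<alpha> * real (k * l) + (\<Sum>t<T. of_bool (target t = i)))"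
    by (rule sum_mono) (rule excluded)
  also have "\<dots> = real k * (\<alpha> * real (k * l)) + (\<Sum>i\<in>{1..k}. \<Sum>t<T. of_bool (target t = i))"
    by (simp add: sum.distrib del: sum_of_bool_eq)
  also have "(\<Sum>i\<in>{1..k}. \<Sum>t<T. of_bool (target t = i) :: real)
      = (\<Sum>t<T. \<Sum>i\<in>{1..k}. of_bool (target t = i))"
    by (rule sum.swap)
  also have "\<dots> = real T"
    using target(1,2) by (simp add: of_bool_def sum.delta' del: sum_of_bool_eq)
  finally show ?thesis .
qed

lemma off_cost_hole:
  assumes "\<alpha> \<ge> 0"
  shows "real (k - 1) * off_cost k l \<alpha> init (reqs T)
    \<le> real (k - 1) * (\<alpha> * real (k * l)) + 2 * \<alpha> * moves T"
proof -
  let ?OFF = "off_cost k l \<alpha> init (reqs T)" and ?h = "hole_perm target"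
  let ?pays = "\<lambda>j t. ?h t j = target (Suc t) \<and> target t \<noteq> target (Suc t)"
  have hole_bounds: "1 \<le> ?h t j \<and> ?h t j \<le> k" if "j \<in> {2..k}" for j t
    using hole_perm_bounds[of target k j t] target(1,2) that by auto
  have following: "?OFF \<le> \<alpha> * real (k * l) + (\<Sum>t<T. 2 * \<alpha> * of_bool (?pays j t))"
    if j: "j \<in> {2..k}" for j
  proof -
    let ?S = "\<lambda>t. conf_without k (?h t j)"
    have step: "\<alpha> * real (migrations k l (?S t) (?S (Suc t))) + comm_cost (?S t) (reqs T ! t)
        \<le> 2 * \<alpha> * of_bool (?pays j t)" if "t < T" for t
    proof -
      have "?h t j \<noteq> target t" using j by (intro hole_perm_neq) auto
      then have comm: "comm_cost (?S t) (reqs T ! t) = 0"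
        using conf_without_same_cluster_iff[OF target(1,2)] hole_bounds[OF j] \<open>t < T\<close>
        by (auto simp: comm_cost_def nth_reqs)
      have mig: "real (migrations k l (?S t) (?S (Suc t))) \<le> 2 * of_bool (?pays j t)"
      proof (cases "?h (Suc t) j = ?h t j")
        case True
        then show ?thesis by simp
      next
        case False
        then have "?pays j t" using j by (intro hole_perm_Suc_neq) auto
        moreover have "migrations k l (?S t) (?S (Suc t)) \<le> 2"
          using hole_bounds[OF j] by (intro migrations_conf_without_le) blast+
        ultimately show ?thesis by simp
      qed
      from mult_left_mono[OF mig assms] comm show ?thesis
        by (simp only: mult.left_commute mult.assoc add_0_right)
    qed
    have "?OFF \<le> sched_cost k l \<alpha> init (map ?S [0..<T]) (reqs T)"
      using assms valid_conf_conf_without[OF _ k_less_kl] hole_bounds[OF j]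
      by (intro off_cost_le_sched_cost) auto
    also have "\<dots> \<le> \<alpha> * real (k * l)
        + (\<Sum>t<T. \<alpha> * real (migrations k l (?S t) (?S (Suc t))) + comm_cost (?S t) (reqs T ! t))"
      using assms by (intro sched_cost_map_le) simp_all
    also have "\<dots> \<le> \<alpha> * real (k * l) + (\<Sum>t<T. 2 * \<alpha> * of_bool (?pays j t))"
      using step by (intro add_left_mono sum_mono) simp
    finally show ?thesis .
  qed
  have at_most_one: "(\<Sum>j\<in>{2..k}. of_bool (?pays j t)) \<le> (of_bool (moved t) :: real)" for t
  proof (cases "target t = target (Suc t)")
    case False
    then have "moved t" using target_Suc by force
    with False sum_of_bool_inj_le_1[OF inj_hole_perm, of "{2..k}" target t "target (Suc t)"]
    show ?thesis by simp
  qed simp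
  have "real (k - 1) * ?OFF = (\<Sum>j\<in>{2..k}. ?OFF)" by simp
  also have "\<dots> \<le> (\<Sum>j\<in>{2..k}. \<alpha> * real (k * l) + (\<Sum>t<T. 2 * \<alpha> * of_bool (?pays j t)))"
    by (rule sum_mono) (rule following)
  also have "\<dots> = real (k - 1) * (\<alpha> * real (k * l))
      + 2 * \<alpha> * (\<Sum>j\<in>{2..k}. \<Sum>t<T. of_bool (?pays j t))"
    by (simp add: sum.distrib sum_distrib_left del: sum_of_bool_eq)
  also have "\<dots> = real (k - 1) * (\<alpha> * real (k * l))
      + 2 * \<alpha> * (\<Sum>t<T. \<Sum>j\<in>{2..k}. of_bool (?pays j t))"
    by (simp only: sum.swap[of _ "{2..k}"])
  also have "\<dots> \<le> real (k - 1) * (\<alpha> * real (k * l)) + 2 * \<alpha> * moves T"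
    unfolding moves_def using assms
    by (intro add_left_mono mult_left_mono sum_mono at_most_one) simp_all
  finally show ?thesis .
qed

lemma on_cost_exceeds:
  assumes "\<alpha> \<ge> 1" and c: "c < real k + (real k - 2) / (2 * \<alpha>)"
  shows "\<exists>T. c * off_cost k l \<alpha> init (reqs T) < on_cost k l \<alpha> init A (reqs T)"
proof -
  define B where "B = real k + (real k - 2) / (2 * \<alpha>)"
  define K where "K = \<alpha> * real (k * l)"
  have "B > 0" using k_ge_2 assms(1) by (simp add: B_def add_pos_nonneg)
  have "K \<ge> 0" using assms(1) by (simp add: K_def)
  obtain n where n: "c * B * K / (B - c) < real n" using reals_Archimedean2 by blast
  define T where "T = Suc n"
  let ?ON = "on_cost k l \<alpha> init A (reqs T)" and ?OFF = "off_cost k l \<alpha> init (reqs T)"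
  have "moves T \<ge> 0" by (simp add: moves_def sum_nonneg)
  then have "moves T \<le> (2 * \<alpha> - 1) * moves T"
    using assms(1) mult_right_mono[of 1 "2 * \<alpha> - 1" "moves T"] by simp
  then have "real T + moves T \<le> ?ON" using on_cost_ge[OF assms(1), of T] by linarith
  then have ON: "real T \<le> ?ON" and bound: "B * ?OFF \<le> ?ON + B * K"
    using \<open>moves T \<ge> 0\<close> additive_ratio_bound[of "real k" \<alpha> "moves T" "real T" ?ON ?OFF K]
      off_cost_static[of \<alpha> T] off_cost_hole[of \<alpha> T] k_ge_2 assms(1)
    by (simp_all add: B_def K_def of_nat_diff)
  show ?thesis
  proof (intro exI, cases "c \<le> 0")
    case True
    then have "c * ?OFF \<le> 0"
      using off_cost_nonneg[OF _ valid_init] assms(1) by (simp add: mult_nonpos_nonneg)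
    with ON show "c * ?OFF < ?ON" unfolding T_def by linarith
  next
    case False
    have "B - c > 0" using c by (simp add: B_def)
    with n False have "c * B * K < (B - c) * real T" by (simp add: T_def field_simps)
    also have "\<dots> \<le> (B - c) * ?ON" using ON \<open>B - c > 0\<close> by simp
    finally have "B * (c * ?OFF) < B * ?ON"
      using mult_left_mono[OF bound, of c] False by (simp add: algebra_simps)
    with \<open>B > 0\<close> show "c * ?OFF < ?ON" by simp
  qed
qed

end

theorem theorem2:
  fixes k l :: nat and \<alpha> :: real and init :: "nat \<Rightarrow> nat"
    and A :: "(nat \<times> nat) list \<Rightarrow> nat \<Rightarrow> nat"
  assumes "k \<ge> 2" and "\<alpha> \<ge> 1" and "l \<ge> 2"
    and "valid_conf k l init" and "online_alg k l A"
  shows "\<forall>c < real k + (real k - 2) / (2 * \<alpha>).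
           \<exists>\<sigma>. valid_reqs k l \<sigma> \<and> on_cost k l \<alpha> init A \<sigma> > c * off_cost k l \<alpha> init \<sigma>"
proof (intro allI impI)
  interpret brp_adversary k l init A
    using assms by unfold_locales
  fix c assume "c < real k + (real k - 2) / (2 * \<alpha>)"
  with on_cost_exceeds[OF assms(2)] obtain T
    where "c * off_cost k l \<alpha> init (reqs T) < on_cost k l \<alpha> init A (reqs T)" by blast
  with valid_reqs_conf show "\<exists>\<sigma>. valid_reqs k l \<sigma> \<and> on_cost k l \<alpha> init A \<sigma> > c * off_cost k l \<alpha> init \<sigma>"
    by blast
qed

end
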